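(* Let $u,v>0$ and $0<a\le 1$, and consider the map $(x,y)\mapsto\big((1-a)x+auy(1-y),\ (1-a)y+avx(1-x)\big)$ (Kopel's map with $b=a$). Define $R_1=u^2v^2-4u^2v-4uv^2+18uv-27$ and $H_3=a^3u^3v^3-4a^3u^3v^2-4a^3u^2v^3+17a^3u^2v^2+4a^3u^2v+4a^3uv^2-2a^2u^2v^2-45a^3uv+8a^2u^2v+8a^2uv^2-36a^2uv+27a^3-4auv+54a^2+36a+8$. If either ($uv>1$, $R_1<0$, $H_3>0$) or ($uv>1$, $R_1>0$, $H_3<0$), then the map has exactly one locally stable positive equilibrium.
   Context: An equilibrium is a real fixed point $(x^*,y^* )$; it is positive if $x^*,y^*>0$. It is called (locally) stable if both eigenvalues of the Jacobian $\begin{pmatrix}1-a & ua(1-2y^* )\\ va(1-2x^* ) & 1-a\end{pmatrix}$ at it have modulus less than $1$, equivalently the Jury conditions $1-\mathrm{Tr}(J)+\mathrm{Det}(J)>0$, $1+\mathrm{Tr}(J)+\mathrm{Det}(J)>0$, $1-\mathrm{Det}(J)>0$ hold. *)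

theory Defs
  imports Complex_Main
begin

definition kopel :: "real \<Rightarrow> real \<Rightarrow> real \<Rightarrow> real \<times> real \<Rightarrow> real \<times> real" where
  "kopel u v a p = (case p of (x, y) \<Rightarrow>
     ((1 - a) * x + a * u * y * (1 - y), (1 - a) * y + a * v * x * (1 - x)))"

definition is_equilibrium :: "real \<Rightarrow> real \<Rightarrow> real \<Rightarrow> real \<times> real \<Rightarrow> bool" where
  "is_equilibrium u v a p \<longleftrightarrow> kopel u v a p = p"

definition positive_point :: "real \<times> real \<Rightarrow> bool" where
  "positive_point p \<longleftrightarrow> fst p > 0 \<and> snd p > 0"

text \<open>Jacobian entries at (x,y): J = [[j11, j12],[j21, j22]].\<close>
definition jac :: "real \<Rightarrow> real \<Rightarrow> real \<Rightarrow> real \<times> real \<Rightarrow> real \<times> real \<times> real \<times> real" where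
  "jac u v a p = (case p of (x, y) \<Rightarrow>
     (1 - a, u * a * (1 - 2 * y), v * a * (1 - 2 * x), 1 - a))"

definition is_eigenvalue :: "real \<Rightarrow> real \<Rightarrow> real \<Rightarrow> real \<times> real \<Rightarrow> complex \<Rightarrow> bool" where
  "is_eigenvalue u v a p lam \<longleftrightarrow> (case jac u v a p of (j11, j12, j21, j22) \<Rightarrow>
     (of_real j11 - lam) * (of_real j22 - lam) - of_real j12 * of_real j21 = 0)"

definition locally_stable :: "real \<Rightarrow> real \<Rightarrow> real \<Rightarrow> real \<times> real \<Rightarrow> bool" where
  "locally_stable u v a p \<longleftrightarrow> (\<forall>lam. is_eigenvalue u v a p lam \<longrightarrow> cmod lam < 1)"

definition R1 :: "real \<Rightarrow> real \<Rightarrow> real" where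
  "R1 u v = u^2*v^2 - 4*u^2*v - 4*u*v^2 + 18*u*v - 27"

definition H3 :: "real \<Rightarrow> real \<Rightarrow> real \<Rightarrow> real" where
  "H3 u v a = a^3*u^3*v^3 - 4*a^3*u^3*v^2 - 4*a^3*u^2*v^3 + 17*a^3*u^2*v^2
     + 4*a^3*u^2*v + 4*a^3*u*v^2 - 2*a^2*u^2*v^2 - 45*a^3*u*v + 8*a^2*u^2*v
     + 8*a^2*u*v^2 - 36*a^2*u*v + 27*a^3 - 4*a*u*v + 54*a^2 + 36*a + 8"

end

theory Submission
  imports Defs
begin

(*
  Put s = 1 - 2x.  The positive equilibria are the points (x, v x (1 - x)) for which s is a
  root of the cubic f(s) = u v (1 + s) (4 - v + v s^2) - 8, and when u v > 1 every real root
  lies in (-1, 1).  The Jacobian has equal diagonal entries, so by the Jury conditions an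
  equilibrium is stable iff P = u v (1 - 2x) (1 - 2y) satisfies 1 - 2/a < P < 1; at a root
  these two conditions are the signs of f'(s) and of a polynomial G(s).  Up to positive
  factors R1 is the discriminant of f, and H3 is the resultant of f and G, i.e. the product
  of G over the three roots of f.
  If R1 < 0, f has a single real root, f' > 0 there, and the two complex roots contribute a
  nonnegative factor to H3, so H3 > 0 forces G > 0 at the real root.  If R1 > 0, f has three
  simple real roots, the product of f' over them is negative, G > 0 at each root where
  f' < 0, and H3 < 0 leaves exactly one root with f' > 0 and G > 0.
*)

lemma ex1_among_three_by_signs:
  fixes d g :: "real \<Rightarrow> real"
  assumes d: "d s1 * d s2 * d s3 < 0" and g: "g s1 * g s2 * g s3 < 0"
    and neg: "\<And>s. s \<in> {s1, s2, s3} \<Longrightarrow> d s < 0 \<Longrightarrow> g s > 0"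
  shows "\<exists>!s. s \<in> {s1, s2, s3} \<and> d s > 0 \<and> g s > 0"
proof (rule ex_ex1I)
  show "\<exists>s. s \<in> {s1, s2, s3} \<and> d s > 0 \<and> g s > 0"
  proof (rule ccontr)
    assume none: "\<not> ?thesis"
    have "d s * g s < 0" if s: "s \<in> {s1, s2, s3}" for s
    proof -
      have "d s \<noteq> 0" "g s \<noteq> 0" using s d g by auto
      moreover have "\<not> (d s > 0 \<and> g s > 0)" using s none by blast
      ultimately consider "d s < 0" "g s > 0" | "d s > 0" "g s < 0"
        using neg[OF s] by linarith
      then show ?thesis by cases (simp_all add: mult_neg_pos mult_pos_neg)
    qed
    then have "(d s1 * g s1) * (d s2 * g s2) * (d s3 * g s3) < 0"
      by (simp add: mult_less_0_iff zero_less_mult_iff)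
    moreover have "(d s1 * d s2 * d s3) * (g s1 * g s2 * g s3) > 0"
      using d g by (rule mult_neg_neg)
    ultimately show False by (simp add: algebra_simps)
  qed
next
  fix s t
  assume s: "s \<in> {s1, s2, s3} \<and> d s > 0 \<and> g s > 0" and t: "t \<in> {s1, s2, s3} \<and> d t > 0 \<and> g t > 0"
  show "s = t"
  proof (rule ccontr)
    assume "s \<noteq> t"
    then have "\<exists>r \<in> {s1, s2, s3}.
        d s * d t * d r = d s1 * d s2 * d s3 \<and> g s * g t * g r = g s1 * g s2 * g s3"
      using s t by (auto simp: ac_simps)
    then obtain r where r: "r \<in> {s1, s2, s3}"
      and "d s * d t * d r = d s1 * d s2 * d s3" "g s * g t * g r = g s1 * g s2 * g s3"
      by blast
    then have "d s * d t * d r < 0" "g s * g t * g r < 0" using d g by simp_all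
    moreover have "d s * d t > 0" "g s * g t > 0" using s t by simp_all
    ultimately have "d r < 0" "g r < 0" by (meson mult_less_0_iff order_less_asym)+
    then show False using neg[OF r] by simp
  qed
qed

lemma ex1_pair_if_ex1_bij:
  assumes "\<exists>!s. Q s" "bij g" "\<And>x y. P (x, y) \<longleftrightarrow> y = f x \<and> Q (g x)"
  shows "\<exists>!p. P p"
proof -
  obtain s where s: "Q s" and unique: "\<And>t. Q t \<Longrightarrow> t = s"
    using assms(1) by blast
  define x where "x = inv g s"
  have gx: "g x = s"
    unfolding x_def by (rule surj_f_inv_f[OF bij_is_surj[OF assms(2)]])
  show ?thesis
  proof (rule ex1I[of _ "(x, f x)"])
    show "P (x, f x)"
      using assms(3) gx s by simp
  next
    fix p
    assume "P p"
    then obtain x' where p: "p = (x', f x')" "Q (g x')"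
      using assms(3) by (cases p) auto
    then have "g x' = g x"
      using unique gx by simp
    then have "x' = x"
      using bij_is_inj[OF assms(2)] by (simp add: inj_eq)
    then show "p = (x, f x)"
      using p by simp
  qed
qed

lemma abs_add_diff_less_one_iff:
  fixes c r :: real
  assumes "r \<ge> 0"
  shows "\<bar>c + r\<bar> < 1 \<and> \<bar>c - r\<bar> < 1 \<longleftrightarrow>
    (1 - c - r) * (1 - c + r) > 0 \<and> (1 + c - r) * (1 + c + r) > 0 \<and> (c - r) * (c + r) < 1"
proof
  assume h: "\<bar>c + r\<bar> < 1 \<and> \<bar>c - r\<bar> < 1"
  then have "\<bar>c - r\<bar> * \<bar>c + r\<bar> < 1 * 1"
    by (intro mult_strict_mono) auto
  then have "(c - r) * (c + r) < 1"
    by (simp add: abs_mult [symmetric])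
  with h assms show "(1 - c - r) * (1 - c + r) > 0 \<and> (1 + c - r) * (1 + c + r) > 0 \<and> (c - r) * (c + r) < 1"
    by (simp add: abs_less_iff)
next
  assume h: "(1 - c - r) * (1 - c + r) > 0 \<and> (1 + c - r) * (1 + c + r) > 0 \<and> (c - r) * (c + r) < 1"
  have "c + r < 1"
  proof (rule ccontr)
    assume "\<not> c + r < 1"
    then have "c - r > 1" using h by (auto simp: zero_less_mult_iff)
    then have "(c - r) * (c + r) > 1 * 1" using \<open>\<not> c + r < 1\<close> assms
      by (intro mult_strict_mono') auto
    with h show False by simp
  qed
  moreover have "c - r > -1"
  proof (rule ccontr)
    assume "\<not> c - r > -1"
    then have "c + r < -1" using h by (auto simp: zero_less_mult_iff)
    then have "(r - c) * (- c - r) > 1 * 1" using \<open>\<not> c - r > -1\<close> assms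
      by (intro mult_strict_mono') auto
    with h show False by (simp add: algebra_simps)
  qed
  ultimately show "\<bar>c + r\<bar> < 1 \<and> \<bar>c - r\<bar> < 1" using assms by (simp add: abs_less_iff)
qed

lemma quadratic_roots_in_unit_disc_iff:
  fixes T D :: real
  shows "(\<forall>z::complex. z^2 - of_real T * z + of_real D = 0 \<longrightarrow> cmod z < 1)
    \<longleftrightarrow> 1 - T + D > 0 \<and> 1 + T + D > 0 \<and> 1 - D > 0"
proof -
  define c d where "c = T / 2" and "d = T^2 / 4 - D"
  define w where "w = csqrt (of_real d)"
  have w2: "w^2 = of_real d" by (simp add: w_def)
  have roots: "z^2 - of_real T * z + of_real D = 0 \<longleftrightarrow> z = of_real c + w \<or> z = of_real c - w"
    for z :: complex
  proof -
    have "z^2 - of_real T * z + of_real D = (z - of_real c)^2 - w^2"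
      unfolding w2 c_def d_def by (simp add: power2_eq_square field_simps)
    also have "\<dots> = 0 \<longleftrightarrow> z - of_real c = w \<or> z - of_real c = - w"
      by (simp add: power2_eq_iff)
    finally show ?thesis
      by (auto simp: algebra_simps)
  qed
  have "(\<forall>z::complex. z^2 - of_real T * z + of_real D = 0 \<longrightarrow> cmod z < 1) \<longleftrightarrow>
      cmod (of_real c + w) < 1 \<and> cmod (of_real c - w) < 1"
    unfolding roots by blast
  also have "\<dots> \<longleftrightarrow> 1 - T + D > 0 \<and> 1 + T + D > 0 \<and> 1 - D > 0"
  proof (cases "d \<ge> 0")
    case True
    define r where "r = sqrt d"
    have "w = of_real r" by (simp add: w_def r_def csqrt_of_real True)
    then have "cmod (of_real c + w) = \<bar>c + r\<bar>" "cmod (of_real c - w) = \<bar>c - r\<bar>"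
      by (simp_all flip: of_real_add of_real_diff)
    moreover have "1 - T + D = (1 - c - r) * (1 - c + r)" "1 + T + D = (1 + c - r) * (1 + c + r)"
        "1 - D = 1 - (c - r) * (c + r)"
      using True by (simp_all add: c_def d_def r_def algebra_simps power2_eq_square)
    ultimately show ?thesis
      using abs_add_diff_less_one_iff[of r c] True by (simp add: r_def)
  next
    case False
    define r where "r = sqrt (- d)"
    have r: "r > 0" "r^2 = - d" using False by (simp_all add: r_def)
    have "w = \<i> * of_real r" using False by (simp add: w_def r_def csqrt_of_real')
    then have "cmod (of_real c + w) = sqrt (c^2 + r^2)" "cmod (of_real c - w) = sqrt (c^2 + r^2)"
      by (simp_all add: cmod_def)
    moreover have "1 - T + D = (1 - c)^2 + r^2" "1 + T + D = (1 + c)^2 + r^2" "D = c^2 + r^2"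
      using r by (simp_all add: c_def d_def algebra_simps power2_eq_square)
    moreover have "(1 - c)^2 + r^2 > 0" "(1 + c)^2 + r^2 > 0"
      using r(1) by (simp_all add: add_nonneg_pos)
    ultimately show ?thesis by simp
  qed
  finally show ?thesis .
qed

lemma locally_stable_iff_jury:
  assumes "jac u v a p = (j11, j12, j21, j22)"
  shows "locally_stable u v a p \<longleftrightarrow>
    (let T = j11 + j22; D = j11 * j22 - j12 * j21 in 1 - T + D > 0 \<and> 1 + T + D > 0 \<and> 1 - D > 0)"
proof -
  have eig: "is_eigenvalue u v a p z \<longleftrightarrow>
      z^2 - of_real (j11 + j22) * z + of_real (j11 * j22 - j12 * j21) = 0" for z
  proof -
    have "(of_real j11 - z) * (of_real j22 - z) - of_real j12 * of_real j21
        = z^2 - of_real (j11 + j22) * z + of_real (j11 * j22 - j12 * j21)"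
      by (simp add: power2_eq_square algebra_simps)
    then show ?thesis
      unfolding is_eigenvalue_def assms prod.case by (rule arg_cong)
  qed
  show ?thesis
    unfolding locally_stable_def eig Let_def by (rule quadratic_roots_in_unit_disc_iff)
qed

lemma kopel_locally_stable_iff:
  fixes u v a x y :: real
  assumes "0 < a" "a \<le> 1"
  defines "P \<equiv> u*v*(1 - 2*x)*(1 - 2*y)"
  shows "locally_stable u v a (x, y) \<longleftrightarrow> a - 2 < a*P \<and> P < 1"
proof -
  have jac: "jac u v a (x, y) = (1 - a, u*a*(1 - 2*y), v*a*(1 - 2*x), 1 - a)"
    by (simp add: jac_def)
  have "locally_stable u v a (x, y) \<longleftrightarrow>
      a^2*(1 - P) > 0 \<and> (2 - a)^2 - a^2*P > 0 \<and> a*(2 - a + a*P) > 0"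
    unfolding locally_stable_iff_jury[OF jac] Let_def P_def
    by (simp add: algebra_simps power2_eq_square)
  also have "\<dots> \<longleftrightarrow> a - 2 < a*P \<and> P < 1"
  proof -
    have "a^2*P < (2 - a)^2" if "P < 1"
    proof -
      have "a^2*P < a^2" using that assms(1) by simp
      also have "a^2 \<le> (2 - a)^2" using assms(1,2) by (simp add: power_mono)
      finally show ?thesis .
    qed
    moreover have "a^2*(1 - P) > 0 \<longleftrightarrow> P < 1" "a*(2 - a + a*P) > 0 \<longleftrightarrow> a - 2 < a*P"
      using assms(1) by (auto simp: zero_less_mult_iff)
    ultimately show ?thesis by auto
  qed
  finally show ?thesis .
qed

lemma kopel_equilibrium_iff:
  assumes "a \<noteq> 0"
  shows "is_equilibrium u v a (x, y) \<longleftrightarrow> x = u*y*(1-y) \<and> y = v*x*(1-x)"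
proof -
  have "kopel u v a (x, y) = (x + a*(u*y*(1-y) - x), y + a*(v*x*(1-x) - y))"
    by (simp add: kopel_def algebra_simps)
  then show ?thesis
    using assms by (auto simp: is_equilibrium_def)
qed

definition equilibrium_cubic :: "real \<Rightarrow> real \<Rightarrow> real \<Rightarrow> real" where
  "equilibrium_cubic u v s = u*v*(1+s)*(4 - v + v*s^2) - 8"

lemma equilibrium_cubic_root_bounds:
  assumes "u*v > 1" "v > 0" "equilibrium_cubic u v s = 0"
  shows "\<bar>s\<bar> < 1"
proof (rule ccontr)
  assume "\<not> \<bar>s\<bar> < 1"
  then have "1 \<le> s^2"
    using abs_le_square_iff[of 1 s] by simp
  then have W: "4 \<le> 4 - v + v*s^2"
    using \<open>v > 0\<close> by (simp add: algebra_simps)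
  have root: "u*v*((1+s)*(4 - v + v*s^2)) = 8"
    using assms(3) by (simp add: equilibrium_cubic_def algebra_simps)
  show False
  proof (cases "s \<ge> 1")
    case True
    then have "2*4 \<le> (1+s)*(4 - v + v*s^2)"
      using W by (intro mult_mono) auto
    then have "u*v*(2*4) \<le> u*v*((1+s)*(4 - v + v*s^2))"
      using assms(1) by (intro mult_left_mono) auto
    then show False using root assms(1) by simp
  next
    case False
    then have "(1+s)*(4 - v + v*s^2) \<le> 0"
      using W \<open>\<not> \<bar>s\<bar> < 1\<close> by (intro mult_nonpos_nonneg) auto
    then have "u*v*((1+s)*(4 - v + v*s^2)) \<le> 0"
      using assms(1) by (simp add: mult_nonneg_nonpos)
    then show False using root by simp
  qed
qed

lemma positive_equilibrium_iff:
  assumes "u*v > 1" "v > 0" "a \<noteq> 0"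
  shows "is_equilibrium u v a (x, y) \<and> positive_point (x, y) \<longleftrightarrow>
    y = v*x*(1-x) \<and> equilibrium_cubic u v (1 - 2*x) = 0"
proof (cases "y = v*x*(1-x)")
  case False
  then show ?thesis using kopel_equilibrium_iff[OF assms(3)] by simp
next
  case y: True
  define m where "m = u*v*(1-x)*(1-y)"
  have "u*y*(1-y) = x*m"
  proof -
    have "u*y*(1-y) - x*m = u*(1-y)*(y - v*x*(1-x))"
      unfolding m_def by algebra
    also have "\<dots> = 0"
      using y by simp
    finally show ?thesis by simp
  qed
  then have x_eq: "x = u*y*(1-y) \<longleftrightarrow> x = 0 \<or> m = 1"
    by simp
  have cubic: "equilibrium_cubic u v (1 - 2*x) = 8*(m - 1)"
    unfolding m_def y equilibrium_cubic_def by algebra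
  show ?thesis
  proof
    assume "is_equilibrium u v a (x, y) \<and> positive_point (x, y)"
    then have "x = 0 \<or> m = 1" "x > 0"
      using kopel_equilibrium_iff[OF assms(3)] x_eq by (auto simp: positive_point_def)
    then show "y = v*x*(1-x) \<and> equilibrium_cubic u v (1 - 2*x) = 0"
      using y cubic by simp
  next
    assume "y = v*x*(1-x) \<and> equilibrium_cubic u v (1 - 2*x) = 0"
    then have "m = 1" "\<bar>1 - 2*x\<bar> < 1"
      using cubic equilibrium_cubic_root_bounds[OF assms(1,2)] by auto
    then have "x = u*y*(1-y)" "0 < x" "x < 1"
      using x_eq by auto
    moreover have "y > 0"
      using y \<open>0 < x\<close> \<open>x < 1\<close> \<open>v > 0\<close> by simp
    ultimately show "is_equilibrium u v a (x, y) \<and> positive_point (x, y)"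
      using kopel_equilibrium_iff[OF assms(3)] y by (simp add: positive_point_def)
  qed
qed

lemma equilibrium_cubic_has_root:
  assumes "u*v \<ge> 1"
  obtains s where "equilibrium_cubic u v s = 0"
proof -
  have "equilibrium_cubic u v (-1) \<le> 0" "0 \<le> equilibrium_cubic u v 1"
    using assms by (simp_all add: equilibrium_cubic_def)
  moreover have "\<forall>s. -1 \<le> s \<and> s \<le> 1 \<longrightarrow> isCont (equilibrium_cubic u v) s"
    unfolding equilibrium_cubic_def by (intro allI impI continuous_intros)
  ultimately show ?thesis
    using IVT[of "equilibrium_cubic u v" "-1" 0 1] that by auto
qed

(* u v * cubic_slope v is the derivative of equilibrium_cubic u v. *)
definition cubic_slope :: "real \<Rightarrow> real \<Rightarrow> real" where
  "cubic_slope v s = 3*v*s^2 + 2*v*s + 4 - v"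

(* The polynomial G: for a > 0, at a root s it has the sign of 1 - det J. *)
definition det_factor :: "real \<Rightarrow> real \<Rightarrow> real \<Rightarrow> real" where
  "det_factor v a s = 4*a*s*(2 - v + v*s^2) + (2 - a)*(1+s)*(4 - v + v*s^2)"

lemma slope_det_signs_at_root:
  fixes u v a s :: real
  assumes "u*v > 1" "v > 0" "equilibrium_cubic u v s = 0"
  defines "P \<equiv> u*v*s*(2 - v + v*s^2)/2"
  shows "cubic_slope v s > 0 \<longleftrightarrow> P < 1" and "cubic_slope v s < 0 \<longleftrightarrow> 1 < P"
    and "det_factor v a s > 0 \<longleftrightarrow> a - 2 < a*P"
proof -
  define K where "K = (1+s)*(4 - v + v*s^2)"
  have "u*v*K = 8"
    using assms(3) unfolding K_def equilibrium_cubic_def by (simp add: mult.assoc)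
  then have K: "K > 0"
    using assms(1) zero_less_mult_iff[of "u*v" K] by simp
  have "2*(K*P) = (u*v*K)*(s*(2 - v + v*s^2))"
    unfolding P_def by (simp add: field_simps)
  then have KP: "K*P = 4*s*(2 - v + v*s^2)"
    using \<open>u*v*K = 8\<close> by simp
  have slope: "cubic_slope v s * (1 - s) = K*(1 - P)"
    unfolding right_diff_distrib KP unfolding K_def cubic_slope_def by algebra
  have "det_factor v a s = a*(K*P) + (2 - a)*K"
    unfolding KP unfolding K_def det_factor_def by algebra
  then have det: "det_factor v a s = K*(a*P + 2 - a)"
    by (simp add: algebra_simps)
  have "1 - s > 0"
    using equilibrium_cubic_root_bounds[OF assms(1-3)] by simp
  then have "sgn (cubic_slope v s) = sgn (1 - P)"
    using arg_cong[OF slope, of sgn] K by (simp add: sgn_mult)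
  then show "cubic_slope v s > 0 \<longleftrightarrow> P < 1" "cubic_slope v s < 0 \<longleftrightarrow> 1 < P"
    by (metis sgn_greater diff_gt_0_iff_gt, metis sgn_less diff_less_0_iff_less)
  show "det_factor v a s > 0 \<longleftrightarrow> a - 2 < a*P"
    unfolding det using K by (auto simp: zero_less_mult_iff)
qed

lemma det_factor_pos_if_slope_neg:
  assumes "0 < a" "u*v > 1" "v > 0" "equilibrium_cubic u v s = 0" "cubic_slope v s < 0"
  shows "det_factor v a s > 0"
proof -
  let ?P = "u*v*s*(2 - v + v*s^2)/2"
  have "1 < ?P"
    using slope_det_signs_at_root(2)[OF assms(2-4)] assms(5) by blast
  then have "a * 1 < a * ?P"
    using assms(1) by (rule mult_strict_left_mono)
  then have "a - 2 < a * ?P"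
    by linarith
  then show ?thesis
    using slope_det_signs_at_root(3)[OF assms(2-4)] by blast
qed

definition stable_root :: "real \<Rightarrow> real \<Rightarrow> real \<Rightarrow> real \<Rightarrow> bool" where
  "stable_root u v a s \<longleftrightarrow> equilibrium_cubic u v s = 0 \<and> cubic_slope v s > 0 \<and> det_factor v a s > 0"

lemma positive_stable_equilibrium_iff:
  assumes "0 < a" "a \<le> 1" "u*v > 1" "v > 0"
  shows "is_equilibrium u v a (x, y) \<and> positive_point (x, y) \<and> locally_stable u v a (x, y) \<longleftrightarrow>
    y = v*x*(1-x) \<and> stable_root u v a (1 - 2*x)"
proof -
  have stable: "locally_stable u v a (x, y) \<longleftrightarrow> cubic_slope v (1 - 2*x) > 0 \<and> det_factor v a (1 - 2*x) > 0"
    if y: "y = v*x*(1-x)" and root: "equilibrium_cubic u v (1 - 2*x) = 0"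
  proof -
    define P where "P = u*v*(1 - 2*x)*(1 - 2*y)"
    have P: "P = u*v*(1 - 2*x)*(2 - v + v*(1 - 2*x)^2)/2"
      unfolding P_def y by (simp add: field_simps power2_eq_square)
    have "locally_stable u v a (x, y) \<longleftrightarrow> a - 2 < a*P \<and> P < 1"
      unfolding P_def by (rule kopel_locally_stable_iff[OF assms(1,2)])
    also have "\<dots> \<longleftrightarrow> det_factor v a (1 - 2*x) > 0 \<and> cubic_slope v (1 - 2*x) > 0"
      unfolding P by (simp only: slope_det_signs_at_root(1,3)[OF assms(3,4) root])
    finally show ?thesis by blast
  qed
  moreover have "is_equilibrium u v a (x, y) \<and> positive_point (x, y) \<longleftrightarrow>
      y = v*x*(1-x) \<and> equilibrium_cubic u v (1 - 2*x) = 0"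
    using positive_equilibrium_iff[OF assms(3,4)] assms(1) by simp
  ultimately show ?thesis
    unfolding stable_root_def by blast
qed

definition cubic_quotient :: "real \<Rightarrow> real \<Rightarrow> real \<Rightarrow> real" where
  "cubic_quotient v s z = v*z^2 + v*(1+s)*z + v*(s^2+s) + 4 - v"

definition quotient_discr :: "real \<Rightarrow> real \<Rightarrow> real" where
  "quotient_discr v s = (v*(1+s))^2 - 4*v*(v*(s^2+s) + 4 - v)"

(* g1 z + g0 is the remainder of det_factor v a z modulo cubic_quotient v s z, and
   det_factor_norm v a s is its resultant with cubic_quotient v s, i.e. v times its product
   over the two roots of cubic_quotient v s. *)
definition det_factor_norm :: "real \<Rightarrow> real \<Rightarrow> real \<Rightarrow> real" where
  "det_factor_norm v a s =
    (let g1 = 4*a*(v*(1+s) - 2);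
         g0 = v*(3*a*s^3 + 7*a*s^2 + a*s - 3*a + 2*s^3 + 2*s^2 - 2*s - 2) + 12*a*s + 12*a + 8*s + 8
     in v*g0^2 - v*(1+s)*g0*g1 + (v*(s^2+s) + 4 - v)*g1^2)"

lemma equilibrium_cubic_expand:
  "equilibrium_cubic u v z = equilibrium_cubic u v s + u*v*(z - s)*cubic_quotient v s z"
  unfolding equilibrium_cubic_def cubic_quotient_def by algebra

lemma cubic_quotient_complete_square:
  "4*v*cubic_quotient v s z = (2*v*z + v*(1+s))^2 - quotient_discr v s"
  unfolding cubic_quotient_def quotient_discr_def by algebra

lemma cubic_quotient_diag: "cubic_quotient v s s = cubic_slope v s"
  unfolding cubic_quotient_def cubic_slope_def by algebra

lemma cubic_quotient_factor:
  assumes "cubic_quotient v s z = 0"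
  shows "cubic_quotient v s w = v*(w - z)*(w - (-1-s-z))"
  using assms unfolding cubic_quotient_def by algebra

lemma quotient_discr_at_root:
  assumes "equilibrium_cubic u v s = 0"
  shows "quotient_discr v s * (u * cubic_slope v s)^2 = 64 * R1 u v"
  using assms unfolding equilibrium_cubic_def quotient_discr_def cubic_slope_def R1_def by algebra

lemma cubic_slope_nonzero_at_root:
  assumes "equilibrium_cubic u v s = 0" "R1 u v \<noteq> 0"
  shows "cubic_slope v s \<noteq> 0"
  using quotient_discr_at_root[OF assms(1)] assms(2) by auto

lemma cubic_slope_product_at_roots:
  assumes "cubic_quotient v s z = 0"
  shows "cubic_slope v s * cubic_slope v z * cubic_slope v (-1-s-z)
    = - (v^3 * ((s - z) * (s - (-1-s-z)) * (z - (-1-s-z)))^2)"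
  using assms unfolding cubic_quotient_def cubic_slope_def by algebra

lemma det_factor_norm_eq_product:
  assumes "cubic_quotient v s z = 0"
  shows "det_factor_norm v a s = v * det_factor v a z * det_factor v a (-1-s-z)"
  using assms unfolding det_factor_norm_def Let_def
    cubic_quotient_def det_factor_def by algebra

lemma det_factor_norm_at_root:
  assumes "equilibrium_cubic u v s = 0"
  shows "det_factor v a s * det_factor_norm v a s * u^3 * v^2 = 512 * H3 u v a"
  using assms unfolding det_factor_norm_def Let_def
    equilibrium_cubic_def det_factor_def H3_def by algebra

lemma det_factor_norm_nonneg:
  assumes "v > 0" "quotient_discr v s \<le> 0"
  shows "det_factor_norm v a s \<ge> 0"
proof -
  obtain g0 g1 where N: "det_factor_norm v a s = v*g0^2 - v*(1+s)*g0*g1 + (v*(s^2+s) + 4 - v)*g1^2"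
    unfolding det_factor_norm_def Let_def by blast
  have "4*v*det_factor_norm v a s = (2*v*g0 - v*(1+s)*g1)^2 - quotient_discr v s * g1^2"
    unfolding N quotient_discr_def by algebra
  moreover have "quotient_discr v s * g1^2 \<le> 0"
    using assms(2) by (simp add: mult_nonpos_nonneg)
  ultimately have "4*v*det_factor_norm v a s \<ge> 0"
    by (smt (verit) zero_le_power2)
  then show ?thesis
    using assms(1) by (simp add: zero_le_mult_iff)
qed

lemma ex1_stable_root_if_R1_neg:
  assumes "u*v > 1" "v > 0" "R1 u v < 0" "H3 u v a > 0"
  shows "\<exists>!s. stable_root u v a s"
proof -
  have "u > 0"
    using assms(1,2) by (smt (verit) mult_nonpos_nonneg)
  obtain s0 where root: "equilibrium_cubic u v s0 = 0"
    using equilibrium_cubic_has_root assms(1) by (meson less_imp_le)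
  have "quotient_discr v s0 * (u * cubic_slope v s0)^2 < 0"
    using quotient_discr_at_root[OF root] assms(3) by simp
  then have discr: "quotient_discr v s0 < 0"
    by (simp add: mult_less_0_iff)
  have quotient_pos: "cubic_quotient v s0 z > 0" for z
  proof -
    have "4*v*cubic_quotient v s0 z > 0"
      unfolding cubic_quotient_complete_square
      using discr zero_le_power2[of "2*v*z + v*(1+s0)"] by linarith
    then show ?thesis
      using assms(2) by (simp add: zero_less_mult_iff)
  qed
  have roots: "equilibrium_cubic u v z = 0 \<longleftrightarrow> z = s0" for z
    using equilibrium_cubic_expand[of u v z s0] root quotient_pos[of z] \<open>u > 0\<close> assms(2) by auto
  have slope: "cubic_slope v s0 > 0"
    using quotient_pos[of s0] by (simp add: cubic_quotient_diag)
  have "det_factor_norm v a s0 * u^3 * v^2 \<ge> 0"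
    using det_factor_norm_nonneg[OF assms(2)] discr \<open>u > 0\<close> by simp
  moreover have "det_factor v a s0 * (det_factor_norm v a s0 * u^3 * v^2) > 0"
    using det_factor_norm_at_root[OF root, of a] assms(4) by (simp add: mult.assoc)
  ultimately have "det_factor v a s0 > 0"
    by (simp add: zero_less_mult_iff)
  then show ?thesis
    using slope unfolding stable_root_def roots by blast
qed

lemma ex1_stable_root_if_R1_pos:
  assumes "0 < a" "u*v > 1" "v > 0" "R1 u v > 0" "H3 u v a < 0"
  shows "\<exists>!s. stable_root u v a s"
proof -
  have "u > 0"
    using assms(2,3) by (smt (verit) mult_nonpos_nonneg)
  obtain s0 where root: "equilibrium_cubic u v s0 = 0"
    using equilibrium_cubic_has_root assms(2) by (meson less_imp_le)
  have "quotient_discr v s0 * (u * cubic_slope v s0)^2 > 0"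
    using quotient_discr_at_root[OF root] assms(4) by simp
  then have discr: "quotient_discr v s0 > 0"
    by (simp add: zero_less_mult_iff)
  define z1 where "z1 = (sqrt (quotient_discr v s0) - v*(1+s0))/(2*v)"
  define z2 where "z2 = -1 - s0 - z1"
  have "2*v*z1 + v*(1+s0) = sqrt (quotient_discr v s0)"
    unfolding z1_def using assms(3) by (simp add: field_simps)
  then have "4*v*cubic_quotient v s0 z1 = 0"
    unfolding cubic_quotient_complete_square using discr by simp
  then have quotient_z1: "cubic_quotient v s0 z1 = 0"
    using assms(3) by simp
  have roots: "equilibrium_cubic u v z = 0 \<longleftrightarrow> z \<in> {s0, z1, z2}" for z
  proof -
    have "equilibrium_cubic u v z = u*v*(z - s0)*(v*(z - z1)*(z - z2))"
      using equilibrium_cubic_expand[of u v z s0] root cubic_quotient_factor[OF quotient_z1, of z]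
      by (simp add: z2_def)
    then show ?thesis
      using \<open>u > 0\<close> assms(3) by auto
  qed
  have "cubic_slope v s0 * cubic_slope v z1 * cubic_slope v z2 \<le> 0"
    using cubic_slope_product_at_roots[OF quotient_z1] assms(3) by (simp add: z2_def)
  moreover have "cubic_slope v s \<noteq> 0" if "s \<in> {s0, z1, z2}" for s
    using cubic_slope_nonzero_at_root roots[of s] that assms(4) by simp
  ultimately have slopes: "cubic_slope v s0 * cubic_slope v z1 * cubic_slope v z2 < 0"
    by (simp add: order_le_less)
  have "det_factor v a s0 * det_factor v a z1 * det_factor v a z2 * (u^3 * v^3) = 512 * H3 u v a"
    using det_factor_norm_at_root[OF root, of a]
    unfolding det_factor_norm_eq_product[OF quotient_z1] z2_def by algebra
  then have "det_factor v a s0 * det_factor v a z1 * det_factor v a z2 * (u^3 * v^3) < 0"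
    using assms(5) by simp
  moreover have "u^3 * v^3 > 0"
    using \<open>u > 0\<close> assms(3) by simp
  ultimately have dets: "det_factor v a s0 * det_factor v a z1 * det_factor v a z2 < 0"
    by (meson mult_less_0_iff order_less_asym)
  have "\<exists>!s. s \<in> {s0, z1, z2} \<and> cubic_slope v s > 0 \<and> det_factor v a s > 0"
    using slopes dets
  proof (rule ex1_among_three_by_signs)
    show "det_factor v a s > 0" if "s \<in> {s0, z1, z2}" "cubic_slope v s < 0" for s
      using det_factor_pos_if_slope_neg[OF assms(1-3)] roots[of s] that by simp
  qed
  then show ?thesis
    unfolding stable_root_def roots .
qed

theorem theorem3:
  fixes u v a :: real
  assumes "u > 0" and "v > 0" and "0 < a" and "a \<le> 1"
    and "(u * v > 1 \<and> R1 u v < 0 \<and> H3 u v a > 0) \<or> (u * v > 1 \<and> R1 u v > 0 \<and> H3 u v a < 0)"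
  shows "\<exists>!p. is_equilibrium u v a p \<and> positive_point p \<and> locally_stable u v a p"
proof (rule ex1_pair_if_ex1_bij)
  have "u * v > 1"
    using assms(5) by blast
  show "\<exists>!s. stable_root u v a s"
    using assms(5) ex1_stable_root_if_R1_neg[OF \<open>u * v > 1\<close> assms(2)]
      ex1_stable_root_if_R1_pos[OF assms(3) \<open>u * v > 1\<close> assms(2)] by blast
  show "bij (\<lambda>x::real. 1 - 2*x)"
    by (rule o_bij[where g = "\<lambda>s. (1 - s)/2"]) (auto simp: fun_eq_iff field_simps)
  show "is_equilibrium u v a (x, y) \<and> positive_point (x, y) \<and> locally_stable u v a (x, y) \<longleftrightarrow>
      y = v*x*(1-x) \<and> stable_root u v a (1 - 2*x)" for x y
    by (rule positive_stable_equilibrium_iff[OF assms(3,4) \<open>u * v > 1\<close> assms(2)])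
qed

end
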